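(* Let $H=H_\omega$ be a weighted analytic Hilbert space and $\varphi$ a symbol for $H$ with $\rho=\|\varphi\|_\infty<1$. Let $\varepsilon>0$ with $\rho e^{\varepsilon}<1$. Then there exists $K_\varepsilon>0$ such that for every $f(z)=\sum_{k\ge0}b_kz^k$ in the unit ball of $H$ and every integer $l\ge1$, setting $S_lf(z)=\sum_{k=0}^{l-1}b_kz^k$, $$\|f\circ\varphi-(S_lf)\circ\varphi\|_\omega\le K_\varepsilon\,\rho^l e^{\varepsilon l}.$$
   Context: Weighted analytic Hilbert space: $\omega\colon[0,1)\to(0,\infty)$ continuous, positive, integrable, extended radially; $H_\omega$ is the space of analytic $f$ on $\mathbb{D}$ with $\|f\|_\omega^2=|f(0)|^2+\int_{\mathbb{D}}|f'|^2\omega\,dA<\infty$ ($dA$ normalized area measure). A symbol for $H$ is an analytic $\varphi\colon\mathbb{D}\to\mathbb{D}$ such that $f\mapsto f\circ\varphi$ maps $H$ into $H$. *)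

theory Defs
  imports "HOL-Analysis.Analysis"
begin

definition weight :: "(real \<Rightarrow> real) \<Rightarrow> bool" where
  "weight \<omega> \<longleftrightarrow> continuous_on {0..<1} \<omega> \<and> (\<forall>r\<in>{0..<1}. \<omega> r > 0)
     \<and> set_integrable lborel {0..<1} \<omega>"

text \<open>Squared norm: |f(0)|^2 + integral over the disc of |f'|^2 omega(|z|) dA,
  with dA = Lebesgue measure / pi (normalized area measure).\<close>
definition Hnorm2 :: "(real \<Rightarrow> real) \<Rightarrow> (complex \<Rightarrow> complex) \<Rightarrow> ennreal" where
  "Hnorm2 \<omega> f = ennreal ((cmod (f 0))\<^sup>2)
     + (\<integral>\<^sup>+ z. ennreal ((cmod (deriv f z))\<^sup>2 * \<omega> (cmod z)) * indicator (ball 0 1) z \<partial>lborel)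
       / ennreal pi"

definition Hnorm :: "(real \<Rightarrow> real) \<Rightarrow> (complex \<Rightarrow> complex) \<Rightarrow> real" where
  "Hnorm \<omega> f = sqrt (enn2real (Hnorm2 \<omega> f))"

definition inH :: "(real \<Rightarrow> real) \<Rightarrow> (complex \<Rightarrow> complex) \<Rightarrow> bool" where
  "inH \<omega> f \<longleftrightarrow> f holomorphic_on ball 0 1 \<and> Hnorm2 \<omega> f < \<infinity>"

definition symbol :: "(real \<Rightarrow> real) \<Rightarrow> (complex \<Rightarrow> complex) \<Rightarrow> bool" where
  "symbol \<omega> \<phi> \<longleftrightarrow> \<phi> holomorphic_on ball 0 1 \<and> \<phi> ` ball 0 1 \<subseteq> ball 0 1
     \<and> (\<forall>f. inH \<omega> f \<longrightarrow> inH \<omega> (f \<circ> \<phi>))"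

definition taylor_coeff :: "(complex \<Rightarrow> complex) \<Rightarrow> nat \<Rightarrow> complex" where
  "taylor_coeff f k = (deriv ^^ k) f 0 / of_nat (fact k)"

definition partial_sum :: "nat \<Rightarrow> (complex \<Rightarrow> complex) \<Rightarrow> complex \<Rightarrow> complex" where
  "partial_sum l f z = (\<Sum>k<l. taylor_coeff f k * z ^ k)"

end

theory Submission
  imports Defs "HOL-Complex_Analysis.Complex_Analysis" "HOL-Probability.Probability"
begin

text \<open>
  Point evaluations are bounded on \<open>H\<^sub>\<omega>\<close> uniformly on every disc \<open>cmod w \<le> s < 1\<close>: the weight
  is bounded below by some \<open>m > 0\<close> on \<open>[0, (1 + s) / 2]\<close>, so the mean value inequality for
  \<open>(cmod f')\<^sup>2\<close> on discs of radius \<open>(1 - s) / 2\<close> bounds \<open>f'\<close> on \<open>cmod w \<le> s\<close> by the weighted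
  Dirichlet integral of \<open>f\<close>, hence by its norm; and \<open>cmod (f 0)\<close> is bounded by the norm as well.
  With \<open>s = exp (- \<epsilon> / 2)\<close> and \<open>r = \<rho> * exp (\<epsilon> / 2)\<close>, Cauchy's estimates turn a bound \<open>C\<close> for
  \<open>f\<close> on \<open>cmod w \<le> s\<close> into bounds of order \<open>(r / s) ^ l = (\<rho> * exp \<epsilon>) ^ l\<close> for the Taylor tail
  \<open>f - S\<^sub>l f\<close> and its derivative on \<open>cmod w \<le> \<rho>\<close>. Finally \<open>\<phi> = id \<circ> \<phi>\<close> lies in \<open>H\<^sub>\<omega>\<close>, and by
  the chain rule the Dirichlet integral of \<open>(f - S\<^sub>l f) \<circ> \<phi>\<close> is at most the squared bound on
  \<open>(f - S\<^sub>l f)'\<close> times that of \<open>\<phi>\<close>.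
\<close>

section \<open>Rotation invariance of Lebesgue measure on the plane\<close>

lemma borel_measurable_Complex[measurable]:
  fixes f g :: "'a \<Rightarrow> real"
  assumes "f \<in> borel_measurable M" "g \<in> borel_measurable M"
  shows "(\<lambda>x. Complex (f x) (g x)) \<in> borel_measurable M"
proof -
  have "(\<lambda>x. Complex (f x) (g x)) = (\<lambda>x. of_real (f x) + \<i> * of_real (g x))"
    by (auto simp: complex_eq_iff)
  then show ?thesis using assms by simp
qed

lemma lborel_complex_eq_distr_pair:
  "(lborel :: complex measure) = distr (lborel \<Otimes>\<^sub>M lborel) borel (\<lambda>p. Complex (fst p) (snd p))"
proof (rule lborel_eqI)
  fix l u :: complex assume le: "\<And>b. b \<in> Basis \<Longrightarrow> l \<bullet> b \<le> u \<bullet> b"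
  have "Re l \<le> Re u" "Im l \<le> Im u" using le[of 1] le[of \<i>] by (auto simp: Basis_complex_def)
  moreover have "(\<lambda>p. Complex (fst p) (snd p)) -` box l u \<inter> space (lborel \<Otimes>\<^sub>M lborel)
      = {Re l<..<Re u} \<times> {Im l<..<Im u}"
    by (auto simp: box_def Basis_complex_def space_pair_measure)
  ultimately show "emeasure (distr (lborel \<Otimes>\<^sub>M lborel) borel (\<lambda>p. Complex (fst p) (snd p))) (box l u)
      = (\<Prod>b\<in>Basis. (u - l) \<bullet> b)"
    by (simp add: emeasure_distr lborel.emeasure_pair_measure_Times ennreal_mult Basis_complex_def)
qed simp

lemma nn_integral_lborel_complex_Im_Re:
  fixes F :: "complex \<Rightarrow> ennreal"
  assumes [measurable]: "F \<in> borel_measurable borel"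
  shows "(\<integral>\<^sup>+z. F z \<partial>lborel) = (\<integral>\<^sup>+y. \<integral>\<^sup>+x. F (Complex x y) \<partial>lborel \<partial>lborel)"
  by (subst lborel_complex_eq_distr_pair)
     (simp add: nn_integral_distr lborel_pair.nn_integral_snd[symmetric] case_prod_beta)

lemma nn_integral_lborel_complex_Re_Im:
  fixes F :: "complex \<Rightarrow> ennreal"
  assumes [measurable]: "F \<in> borel_measurable borel"
  shows "(\<integral>\<^sup>+z. F z \<partial>lborel) = (\<integral>\<^sup>+x. \<integral>\<^sup>+y. F (Complex x y) \<partial>lborel \<partial>lborel)"
  by (subst lborel_complex_eq_distr_pair)
     (simp add: nn_integral_distr lborel.nn_integral_fst[symmetric] case_prod_beta)

definition shear_Re :: "real \<Rightarrow> complex \<Rightarrow> complex" where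
  "shear_Re a z = Complex (Re z + a * Im z) (Im z)"

definition shear_Im :: "real \<Rightarrow> complex \<Rightarrow> complex" where
  "shear_Im a z = Complex (Re z) (Im z + a * Re z)"

lemma borel_measurable_shear_Re[measurable]: "shear_Re a \<in> borel_measurable borel"
  unfolding shear_Re_def[abs_def] by measurable

lemma borel_measurable_shear_Im[measurable]: "shear_Im a \<in> borel_measurable borel"
  unfolding shear_Im_def[abs_def] by measurable

lemma lborel_distr_eq_lborelI:
  fixes S :: "'a::euclidean_space \<Rightarrow> 'a"
  assumes [measurable]: "S \<in> borel_measurable borel"
    and invariant: "\<And>F. F \<in> borel_measurable borel \<Longrightarrow>
      (\<integral>\<^sup>+z. F (S z) \<partial>lborel) = (\<integral>\<^sup>+z. F z \<partial>lborel)"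
  shows "distr lborel borel S = lborel"
proof (rule measure_eqI)
  fix A assume "A \<in> sets (distr lborel borel S)"
  then have [measurable]: "A \<in> sets borel" by simp
  have "emeasure (distr lborel borel S) A = emeasure lborel (S -` A \<inter> space lborel)"
    by (simp add: emeasure_distr)
  also have "\<dots> = (\<integral>\<^sup>+z. indicator A (S z) \<partial>lborel)"
  proof -
    have "S -` A \<in> sets lborel" using measurable_sets[of S borel borel A] by simp
    then show ?thesis
      by (simp add: nn_integral_indicator[symmetric] indicator_vimage[symmetric] del: nn_integral_indicator)
  qed
  also have "\<dots> = emeasure lborel A" by (simp add: invariant)
  finally show "emeasure (distr lborel borel S) A = emeasure lborel A" .
qed simp

lemma lborel_distr_shear_Re: "distr lborel borel (shear_Re a) = lborel"
proof (rule lborel_distr_eq_lborelI)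
  fix F :: "complex \<Rightarrow> ennreal" assume [measurable]: "F \<in> borel_measurable borel"
  have "(\<integral>\<^sup>+x. F (shear_Re a (Complex x y)) \<partial>lborel) = (\<integral>\<^sup>+x. F (Complex x y) \<partial>lborel)" for y
  proof -
    have "(\<lambda>x. F (Complex x y)) \<in> borel_measurable borel" by measurable
    from nn_integral_real_affine[OF this, of 1 "a * y"] show ?thesis
      by (simp add: shear_Re_def add.commute)
  qed
  then show "(\<integral>\<^sup>+z. F (shear_Re a z) \<partial>lborel) = (\<integral>\<^sup>+z. F z \<partial>lborel)"
    by (simp add: nn_integral_lborel_complex_Im_Re)
qed simp

lemma lborel_distr_shear_Im: "distr lborel borel (shear_Im a) = lborel"
proof (rule lborel_distr_eq_lborelI)
  fix F :: "complex \<Rightarrow> ennreal" assume [measurable]: "F \<in> borel_measurable borel"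
  have "(\<integral>\<^sup>+y. F (shear_Im a (Complex x y)) \<partial>lborel) = (\<integral>\<^sup>+y. F (Complex x y) \<partial>lborel)" for x
  proof -
    have "(\<lambda>y. F (Complex x y)) \<in> borel_measurable borel" by measurable
    from nn_integral_real_affine[OF this, of 1 "a * x"] show ?thesis
      by (simp add: shear_Im_def add.commute)
  qed
  then show "(\<integral>\<^sup>+z. F (shear_Im a z) \<partial>lborel) = (\<integral>\<^sup>+z. F z \<partial>lborel)"
    by (simp add: nn_integral_lborel_complex_Re_Im)
qed simp

text \<open>Each shear preserves Lebesgue measure by Fubini and translation invariance on lines, and
  every rotation other than the half-turn is a product of three shears.\<close>

lemma cis_mult_eq_shears:
  assumes "cos \<theta> \<noteq> -1"
  defines "t \<equiv> sin \<theta> / (1 + cos \<theta>)"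
  shows "(\<lambda>v. cis \<theta> * v) = shear_Re (- t) \<circ> shear_Im (sin \<theta>) \<circ> shear_Re (- t)"
proof -
  have c: "1 + cos \<theta> \<noteq> 0" using assms(1) by linarith
  have ts: "t * sin \<theta> = 1 - cos \<theta>"
    using c sin_cos_squared_add[of \<theta>]
    by (simp add: t_def field_simps power2_eq_square)
  have "2 * t - sin \<theta> * t * t = t * (2 - t * sin \<theta>)"
    by (simp add: algebra_simps)
  also have "\<dots> = t * (1 + cos \<theta>)"
    using ts by simp
  also have "\<dots> = sin \<theta>" using c by (simp add: t_def)
  finally have tt: "2 * t - sin \<theta> * t * t = sin \<theta>" .
  show ?thesis
  proof
    fix v
    have "Re v - t * Im v - t * (Im v + sin \<theta> * (Re v - t * Im v))
        = Re v * (1 - t * sin \<theta>) - Im v * (2 * t - sin \<theta> * t * t)"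
      by (simp add: algebra_simps)
    moreover have "Im v + sin \<theta> * (Re v - t * Im v) = Re v * sin \<theta> + Im v * (1 - t * sin \<theta>)"
      by (simp add: algebra_simps)
    ultimately show "cis \<theta> * v = (shear_Re (- t) \<circ> shear_Im (sin \<theta>) \<circ> shear_Re (- t)) v"
      by (simp add: shear_Re_def shear_Im_def complex_eq_iff ts tt)
  qed
qed

lemma lborel_distr_cis_mult: "distr lborel borel (\<lambda>v. cis \<theta> * v) = (lborel :: complex measure)"
proof -
  have shears: "distr lborel borel (\<lambda>v. cis a * v) = (lborel :: complex measure)"
    if "cos a \<noteq> -1" for a
  proof -
    let ?t = "sin a / (1 + cos a)"
    have "distr lborel borel (\<lambda>v. cis a * v) =
        distr (distr (distr lborel borel (shear_Re (- ?t))) borel (shear_Im (sin a))) borel (shear_Re (- ?t))"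
      by (simp add: cis_mult_eq_shears[OF that] distr_distr comp_def)
    then show ?thesis by (simp add: lborel_distr_shear_Re lborel_distr_shear_Im)
  qed
  show ?thesis
  proof (cases "cos \<theta> = -1")
    case True
    \<comment> \<open>the half-turn is the square of a quarter-turn\<close>
    then have half: "cos (\<theta> / 2) \<noteq> -1"
      using cos_double_cos[of "\<theta> / 2"] by auto
    have "distr lborel borel (\<lambda>v. cis \<theta> * v) =
        distr (distr lborel borel (\<lambda>v. cis (\<theta> / 2) * v)) borel (\<lambda>v. cis (\<theta> / 2) * v)"
      by (simp add: distr_distr comp_def mult.assoc[symmetric] cis_mult)
    then show ?thesis by (simp add: shears[OF half])
  qed (rule shears)
qed

section \<open>The mean value inequality on discs\<close>

lemma has_integral_circle_mean:
  assumes holg: "g holomorphic_on ball 0 R" and v: "cmod v < R"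
  shows "((\<lambda>x. g (cis (2 * pi * x) * v)) has_integral g 0) {0..1}"
proof (cases "v = 0")
  case True
  then show ?thesis using has_integral_const_real[of "g 0" 0 1] by simp
next
  case False
  define r where "r = cmod v"
  have r: "0 < r" "r < R" using False v by (auto simp: r_def)
  define u where "u = v / of_real r"
  define h where "h = (\<lambda>w. g (u * w))"
  have holh: "h holomorphic_on ball 0 R"
    unfolding h_def using r
    by (intro holomorphic_on_compose_gen[OF _ holg, unfolded o_def])
       (auto simp: norm_mult norm_divide u_def r_def holomorphic_intros)
  have "((\<lambda>\<xi>. h \<xi> / (\<xi> - 0)) has_contour_integral (2 * of_real pi * \<i> * h 0)) (circlepath 0 r)"
    using holh r
    by (intro Cauchy_integral_circlepath)
       (auto intro: holomorphic_on_subset continuous_on_subset[OF holomorphic_on_imp_continuous_on])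
  then have I: "((\<lambda>x. h (circlepath 0 r x) / (circlepath 0 r x - 0) *
      vector_derivative (circlepath 0 r) (at x within {0..1})) has_integral (2 * of_real pi * \<i> * h 0)) {0..1}"
    by (simp add: has_contour_integral_def)
  have "h (circlepath 0 r x) / (circlepath 0 r x - 0) * vector_derivative (circlepath 0 r) (at x within {0..1})
      = (2 * of_real pi * \<i>) * g (cis (2 * pi * x) * v)" if "x \<in> {0..1}" for x
  proof -
    have e: "exp (2 * of_real pi * \<i> * of_real x) = cis (2 * pi * x)"
      by (simp add: cis_conv_exp mult_ac)
    have vd: "vector_derivative (circlepath 0 r) (at x within {0..1}) = 2 * pi * \<i> * r * cis (2 * pi * x)"
      using that by (simp add: vector_derivative_circlepath01 e)
    have cp: "circlepath 0 r x = of_real r * cis (2 * pi * x)"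
      by (simp add: circlepath e)
    have uv: "u * (of_real r * cis (2 * pi * x)) = cis (2 * pi * x) * v"
      using r by (simp add: u_def)
    show ?thesis unfolding vd cp h_def uv using r by (simp add: field_simps)
  qed
  then have "((\<lambda>x. (2 * of_real pi * \<i>) * g (cis (2 * pi * x) * v)) has_integral
      (2 * of_real pi * \<i> * g 0)) {0..1}"
    using I by (subst (asm) has_integral_cong) (auto simp: h_def)
  from has_integral_mult_right[OF this, of "inverse (2 * of_real pi * \<i>)"] show ?thesis
    by (simp add: field_simps)
qed

lemma set_integrable_ball_if_continuous_on_cball:
  fixes f :: "'a::euclidean_space \<Rightarrow> 'b::{banach, second_countable_topology}"
  assumes "continuous_on (cball c r) f"
  shows "set_integrable lborel (ball c r) f"
proof -
  have "set_integrable lborel (cball c r) f"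
    using borel_integrable_compact[OF compact_cball assms] by (simp add: set_integrable_def)
  then show ?thesis by (rule set_integrable_subset) auto
qed

lemma
  fixes f :: "complex \<Rightarrow> 'a::{banach, second_countable_topology}"
  assumes [measurable]: "f \<in> borel_measurable borel"
  shows integrable_lborel_cis_mult_iff: "integrable lborel (\<lambda>v. f (cis \<theta> * v)) \<longleftrightarrow> integrable lborel f"
    and integral_lborel_cis_mult: "(\<integral>v. f (cis \<theta> * v) \<partial>lborel) = (\<integral>v. f v \<partial>lborel)"
  using integrable_distr_eq[of "\<lambda>v. cis \<theta> * v" lborel borel f]
    integral_distr[of "\<lambda>v. cis \<theta> * v" lborel borel f]
  by (simp_all add: lborel_distr_cis_mult)

lemma integral_rotation_average:
  fixes G :: "complex \<Rightarrow> 'a::{banach, second_countable_topology}"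
  assumes G: "integrable lborel G"
  shows "(\<integral>v. (\<integral>\<theta>. indicator {0..1} \<theta> *\<^sub>R G (cis (2 * pi * \<theta>) * v) \<partial>lborel) \<partial>lborel)
    = (\<integral>v. G v \<partial>lborel)"
proof -
  have Gm[measurable]: "G \<in> borel_measurable borel"
    using borel_measurable_integrable[OF G] by simp
  have [measurable]: "(\<lambda>p::real \<times> complex. cis (2 * pi * fst p) * snd p) \<in> borel_measurable (lborel \<Otimes>\<^sub>M lborel)"
  proof -
    have "(\<lambda>p::real \<times> complex. cis (2 * pi * fst p) * snd p) \<in> borel_measurable borel"
      by (intro borel_measurable_continuous_onI continuous_intros)
    then show ?thesis by (simp add: lborel_prod measurable_lborel1)
  qed
  define F where "F = (\<lambda>\<theta> v. indicator {0..1::real} \<theta> *\<^sub>R G (cis (2 * pi * \<theta>) * v))"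
  have inner: "(\<integral>v. F \<theta> v \<partial>lborel) = indicator {0..1} \<theta> *\<^sub>R (\<integral>v. G v \<partial>lborel)" for \<theta>
    by (simp add: F_def integral_lborel_cis_mult[OF Gm])
  have "integrable (lborel \<Otimes>\<^sub>M lborel) (case_prod F)"
  proof (rule lborel_pair.Fubini_integrable)
    show "case_prod F \<in> borel_measurable (lborel \<Otimes>\<^sub>M lborel)"
      unfolding F_def case_prod_beta by measurable
    have "(\<integral>v. norm (F \<theta> v) \<partial>lborel) = indicator {0..1} \<theta> * (\<integral>v. norm (G v) \<partial>lborel)" for \<theta>
      by (simp add: F_def integral_lborel_cis_mult[of "\<lambda>v. norm (G v)"])
    then show "integrable lborel (\<lambda>\<theta>. \<integral>v. norm (case_prod F (\<theta>, v)) \<partial>lborel)"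
      by (simp add: integrable_mult_left integrable_indicator_iff)
    show "AE \<theta> in lborel. integrable lborel (\<lambda>v. case_prod F (\<theta>, v))"
      using G by (simp add: F_def integrable_lborel_cis_mult_iff)
  qed
  then have "(\<integral>v. (\<integral>\<theta>. F \<theta> v \<partial>lborel) \<partial>lborel) = (\<integral>\<theta>. (\<integral>v. F \<theta> v \<partial>lborel) \<partial>lborel)"
    by (rule lborel_pair.Fubini_integral)
  also have "\<dots> = (\<integral>v. G v \<partial>lborel)"
    by (simp add: inner)
  finally show ?thesis by (simp add: F_def)
qed

lemma measure_lborel_ball_complex: "0 \<le> r \<Longrightarrow> measure lborel (ball (c::complex) r) = pi * r\<^sup>2"
  using emeasure_ball[of r c] by (simp add: measure_def unit_ball_vol_2)

lemma integral_ball_holomorphic: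
  fixes g :: "complex \<Rightarrow> complex"
  assumes holg: "g holomorphic_on ball 0 R" and \<delta>: "0 < \<delta>" "\<delta> < R"
  shows "(\<integral>v. indicator (ball 0 \<delta>) v *\<^sub>R g v \<partial>lborel) = (pi * \<delta>\<^sup>2) *\<^sub>R g 0"
proof -
  have contg: "continuous_on (cball 0 \<delta>) g"
    using holomorphic_on_imp_continuous_on[OF holg] \<delta> by (elim continuous_on_subset) auto
  have circle: "(\<integral>\<theta>. indicator {0..1} \<theta> *\<^sub>R g (cis (2 * pi * \<theta>) * v) \<partial>lborel) = g 0"
    if "v \<in> ball 0 \<delta>" for v
  proof -
    have "continuous_on {0..1} (\<lambda>\<theta>. g (cis (2 * pi * \<theta>) * v))"
      using that by (intro continuous_on_compose2[OF contg] continuous_intros) (auto simp: norm_mult)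
    then have "set_integrable lborel {0..1} (\<lambda>\<theta>. g (cis (2 * pi * \<theta>) * v))"
      unfolding set_integrable_def by (rule borel_integrable_compact[rotated]) simp
    from set_borel_integral_eq_integral(2)[OF this]
    have "(\<integral>\<theta>. indicator {0..1} \<theta> *\<^sub>R g (cis (2 * pi * \<theta>) * v) \<partial>lborel)
        = integral {0..1} (\<lambda>\<theta>. g (cis (2 * pi * \<theta>) * v))"
      by (simp add: set_lebesgue_integral_def)
    also have "\<dots> = g 0"
      using that \<delta> by (intro integral_unique has_integral_circle_mean[OF holg]) simp
    finally show ?thesis .
  qed
  have "integrable lborel (\<lambda>v. indicator (ball 0 \<delta>) v *\<^sub>R g v)"
    using set_integrable_ball_if_continuous_on_cball[OF contg] by (simp add: set_integrable_def)
  \<comment> \<open>averaging over rotations turns the disc integral into an integral of circle means\<close>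
  from integral_rotation_average[OF this, symmetric]
  have "(\<integral>v. indicator (ball 0 \<delta>) v *\<^sub>R g v \<partial>lborel) = (\<integral>v. (\<integral>\<theta>. indicator {0..1} \<theta> *\<^sub>R
      (indicator (ball 0 \<delta>) (cis (2 * pi * \<theta>) * v) *\<^sub>R g (cis (2 * pi * \<theta>) * v)) \<partial>lborel) \<partial>lborel)" .
  also have "\<dots> = (\<integral>v. indicator (ball (0::complex) \<delta>) v *\<^sub>R g 0 \<partial>lborel)"
  proof (rule Bochner_Integration.integral_cong[OF refl])
    fix v :: complex
    have "indicator (ball 0 \<delta>) (cis (2 * pi * \<theta>) * v) = (indicator (ball 0 \<delta>) v :: real)" for \<theta>
      by (simp add: indicator_def norm_mult)
    then show "(\<integral>\<theta>. indicator {0..1} \<theta> *\<^sub>R (indicator (ball 0 \<delta>) (cis (2 * pi * \<theta>) * v) *\<^sub>R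
        g (cis (2 * pi * \<theta>) * v)) \<partial>lborel) = indicator (ball 0 \<delta>) v *\<^sub>R g 0"
      by (cases "v \<in> ball 0 \<delta>") (simp_all add: circle)
  qed
  also have "\<dots> = (pi * \<delta>\<^sup>2) *\<^sub>R g 0"
    using emeasure_lborel_ball_finite[of "0::complex" \<delta>] \<delta>
    by (simp add: measure_lborel_ball_complex infinity_ennreal_def)
  finally show ?thesis .
qed

lemma norm_sq_le_ball_integral_0:
  fixes g :: "complex \<Rightarrow> complex"
  assumes holg: "g holomorphic_on ball 0 R" and \<delta>: "0 < \<delta>" "\<delta> < R"
  shows "(cmod (g 0))\<^sup>2 * (pi * \<delta>\<^sup>2) \<le> (\<integral>v. indicator (ball 0 \<delta>) v * (cmod (g v))\<^sup>2 \<partial>lborel)"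
proof -
  define a where "a = g 0"
  define G where "G = (\<lambda>v. indicator (ball 0 \<delta>) v *\<^sub>R g v)"
  have contg: "continuous_on (cball 0 \<delta>) g"
    using holomorphic_on_imp_continuous_on[OF holg] \<delta> by (elim continuous_on_subset) auto
  have intG: "integrable lborel G"
    using set_integrable_ball_if_continuous_on_cball[OF contg] by (simp add: set_integrable_def G_def)
  have intD: "integrable lborel (\<lambda>v. indicator (ball (0::complex) \<delta>) v :: real)"
    using emeasure_lborel_ball_finite[of "0::complex" \<delta>]
    by (simp add: integrable_indicator_iff infinity_ennreal_def)
  have intReG: "integrable lborel (\<lambda>v. 2 * Re (cnj a * G v))"
    using intG by (intro integrable_mult_right integrable_Re) simp
  \<comment> \<open>integrate \<open>2 * Re (cnj a * g v) - (cmod a)\<^sup>2 \<le> (cmod (g v))\<^sup>2\<close>; the mean value property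
    evaluates the left-hand side\<close>
  have "(cmod a)\<^sup>2 * (pi * \<delta>\<^sup>2) = 2 * Re (cnj a * ((pi * \<delta>\<^sup>2) *\<^sub>R a)) - (cmod a)\<^sup>2 * (pi * \<delta>\<^sup>2)"
    by (simp add: cmod_power2 algebra_simps power2_eq_square flip: power2_eq_square)
  also have "\<dots> = 2 * Re (cnj a * (\<integral>v. G v \<partial>lborel)) - (cmod a)\<^sup>2 * measure lborel (ball (0::complex) \<delta>)"
    using integral_ball_holomorphic[OF holg \<delta>] \<delta>
    by (simp add: G_def a_def measure_lborel_ball_complex)
  also have "\<dots> = (\<integral>v. 2 * Re (cnj a * G v) - (cmod a)\<^sup>2 * indicator (ball 0 \<delta>) v \<partial>lborel)"
    using intG intD intReG
    by (simp add: integral_diff integral_Re emeasure_lborel_ball_finite)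
  also have "\<dots> \<le> (\<integral>v. indicator (ball 0 \<delta>) v * (cmod (g v))\<^sup>2 \<partial>lborel)"
  proof (rule integral_mono)
    show "integrable lborel (\<lambda>v. 2 * Re (cnj a * G v) - (cmod a)\<^sup>2 * indicator (ball 0 \<delta>) v)"
      using intReG intD by simp
    show "integrable lborel (\<lambda>v. indicator (ball 0 \<delta>) v * (cmod (g v))\<^sup>2)"
      using set_integrable_ball_if_continuous_on_cball[of 0 \<delta> "\<lambda>v. (cmod (g v))\<^sup>2"] contg
      by (simp add: set_integrable_def continuous_intros)
    fix v
    have "2 * Re (cnj a * g v) \<le> (cmod a)\<^sup>2 + (cmod (g v))\<^sup>2"
      using zero_le_power2[of "cmod (g v - a)"] by (simp add: cmod_power2 power2_diff algebra_simps)
    then show "2 * Re (cnj a * G v) - (cmod a)\<^sup>2 * indicator (ball 0 \<delta>) v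
        \<le> indicator (ball 0 \<delta>) v * (cmod (g v))\<^sup>2"
      by (simp add: G_def indicator_def)
  qed
  finally show ?thesis by (simp add: a_def)
qed

lemma norm_sq_le_ball_integral:
  fixes h :: "complex \<Rightarrow> complex"
  assumes holh: "h holomorphic_on ball c R" and \<delta>: "0 < \<delta>" "\<delta> < R"
  shows "(cmod (h c))\<^sup>2 * (pi * \<delta>\<^sup>2) \<le> (\<integral>v. indicator (ball c \<delta>) v * (cmod (h v))\<^sup>2 \<partial>lborel)"
proof -
  have "(\<lambda>v. h (c + v)) holomorphic_on ball 0 R"
    by (rule holomorphic_on_compose_gen[OF _ holh, unfolded o_def])
       (auto intro!: holomorphic_intros simp: dist_norm)
  from norm_sq_le_ball_integral_0[OF this \<delta>]
  have "(cmod (h c))\<^sup>2 * (pi * \<delta>\<^sup>2) \<le> (\<integral>v. indicator (ball c \<delta>) (c + v) * (cmod (h (c + v)))\<^sup>2 \<partial>lborel)"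
    by (simp add: indicator_def dist_norm)
  also have "\<dots> = (\<integral>v. indicator (ball c \<delta>) v * (cmod (h v))\<^sup>2 \<partial>lborel)"
  proof -
    have "continuous_on (cball c \<delta>) (\<lambda>v. (cmod (h v))\<^sup>2)"
      using holomorphic_on_imp_continuous_on[OF holh] \<delta>
      by (intro continuous_intros) (auto elim: continuous_on_subset)
    from set_integrable_ball_if_continuous_on_cball[OF this]
    have [measurable]: "(\<lambda>v. indicator (ball c \<delta>) v * (cmod (h v))\<^sup>2) \<in> borel_measurable borel"
      using borel_measurable_integrable by (simp add: set_integrable_def)
    show ?thesis
      using integral_distr[of "(+) c" lborel borel "\<lambda>v. indicator (ball c \<delta>) v * (cmod (h v))\<^sup>2"]
      by (simp add: lborel_distr_plus)
  qed
  finally show ?thesis .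
qed

section \<open>Radial integrals over the unit disc\<close>

lemma emeasure_unit_disc_Int_norm_le:
  "emeasure lborel (cball (0::complex) 1 \<inter> {z. cmod z \<le> x}) = ennreal (pi * (min (max x 0) 1)\<^sup>2)"
proof (cases "x < 0")
  case True
  then have "\<not> cmod z \<le> x" for z :: complex
    by (metis norm_ge_zero order.trans not_le)
  then have "cball (0::complex) 1 \<inter> {z. cmod z \<le> x} = {}" by auto
  then show ?thesis using True by simp
next
  case False
  then have "cball (0::complex) 1 \<inter> {z. cmod z \<le> x} = cball 0 (min x 1)" by auto
  then show ?thesis
    using False emeasure_cball[of "min x 1" "0::complex"] by (simp add: unit_ball_vol_2)
qed

lemma nn_integral_radial_density_atMost:
  "(\<integral>\<^sup>+r. ennreal (2 * pi * r) * indicator {0..1} r * indicator {..x} r \<partial>lborel)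
    = ennreal (pi * (min (max x 0) 1)\<^sup>2)"
proof -
  define m where "m = min (max x 0) 1"
  have m: "0 \<le> m" by (simp add: m_def)
  have "(\<integral>\<^sup>+r. ennreal (2 * pi * r) * indicator {0..1} r * indicator {..x} r \<partial>lborel)
      = (\<integral>\<^sup>+r\<in>{0..m}. ennreal (2 * pi * r) \<partial>lborel)"
    by (intro nn_integral_cong) (auto simp: m_def split: split_indicator)
  also have "\<dots> = ennreal (pi * m\<^sup>2 - pi * 0\<^sup>2)"
    using m by (intro nn_integral_FTC_Icc) (auto intro!: derivative_eq_intros)
  finally show ?thesis by (simp add: m_def)
qed

lemma borel_measurable_indicator_cball[measurable]:
  "(indicator (cball c r) :: 'a::euclidean_space \<Rightarrow> ennreal) \<in> borel_measurable borel"
  by (simp add: borel_measurable_indicator)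

text \<open>Polar coordinates for radial functions: both measures below give mass \<open>\<pi> x\<^sup>2\<close> to \<open>[0, x]\<close>
  for \<open>0 \<le> x \<le> 1\<close>, so they agree.\<close>

lemma distr_norm_unit_disc:
  "distr (density lborel (indicator (cball (0::complex) 1))) borel cmod
    = density lborel (\<lambda>r. ennreal (2 * pi * r) * indicator {0..1} r)"
  (is "?M1 = ?M2")
proof (rule cdf_unique')
  have [measurable]: "cmod -` {..x} \<in> sets borel" for x
  proof -
    have "closed {z::complex. cmod z \<le> x}" by (intro closed_Collect_le continuous_intros)
    then show ?thesis by (simp add: vimage_def borel_closed)
  qed
  have "emeasure ?M1 {..x} = emeasure lborel (cball (0::complex) 1 \<inter> {z. cmod z \<le> x})" for x
  proof -
    have "emeasure ?M1 {..x} = (\<integral>\<^sup>+z. indicator (cball 0 1) z * indicator (cmod -` {..x}) z \<partial>lborel)"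
      by (subst emeasure_distr) (auto simp: emeasure_density nn_integral_set_ennreal mult.commute)
    also have "\<dots> = (\<integral>\<^sup>+z. indicator (cball (0::complex) 1 \<inter> {z. cmod z \<le> x}) z \<partial>lborel)"
      by (intro nn_integral_cong) (auto split: split_indicator)
    finally show ?thesis by simp
  qed
  moreover have "emeasure ?M2 {..x} =
      (\<integral>\<^sup>+r. ennreal (2 * pi * r) * indicator {0..1} r * indicator {..x} r \<partial>lborel)" for x
    by (simp add: emeasure_density)
  ultimately show "cdf ?M1 = cdf ?M2"
    by (simp add: fun_eq_iff cdf_def measure_def emeasure_unit_disc_Int_norm_le
        nn_integral_radial_density_atMost)
  have "emeasure ?M1 UNIV = emeasure lborel (cball (0::complex) 1)"
    by (simp add: emeasure_distr emeasure_density)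
  then show "finite_borel_measure ?M1"
    using emeasure_cball[of 1 "0::complex"]
    by (auto simp: finite_borel_measure_def finite_borel_measure_axioms_def intro: finite_measureI)
  have "emeasure ?M2 UNIV = (\<integral>\<^sup>+r. ennreal (2 * pi * r) * indicator {0..1} r \<partial>lborel)"
    by (simp add: emeasure_density)
  also have "\<dots> = ennreal (pi * 1\<^sup>2 - pi * 0\<^sup>2)"
    by (rule nn_integral_FTC_Icc) (auto intro!: derivative_eq_intros)
  finally show "finite_borel_measure ?M2"
    by (auto simp: finite_borel_measure_def finite_borel_measure_axioms_def intro: finite_measureI)
qed

lemma nn_integral_unit_disc_radial:
  fixes W :: "real \<Rightarrow> ennreal"
  assumes [measurable]: "W \<in> borel_measurable borel"
  shows "(\<integral>\<^sup>+z. indicator (cball (0::complex) 1) z * W (cmod z) \<partial>lborel)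
    = (\<integral>\<^sup>+r. ennreal (2 * pi * r) * indicator {0..1} r * W r \<partial>lborel)"
proof -
  have "(\<integral>\<^sup>+z. indicator (cball (0::complex) 1) z * W (cmod z) \<partial>lborel)
      = (\<integral>\<^sup>+r. W r \<partial>distr (density lborel (indicator (cball (0::complex) 1))) borel cmod)"
    by (simp add: nn_integral_density nn_integral_distr)
  also have "\<dots> = (\<integral>\<^sup>+r. ennreal (2 * pi * r) * indicator {0..1} r * W r \<partial>lborel)"
    by (simp add: distr_norm_unit_disc nn_integral_density)
  finally show ?thesis .
qed

section \<open>Point evaluations on \<open>H\<^sub>\<omega>\<close>\<close>

text \<open>Unnormalised: \<open>Hnorm2\<close> divides it by \<open>\<pi>\<close>.\<close>
definition dirichlet_integral :: "(real \<Rightarrow> real) \<Rightarrow> (complex \<Rightarrow> complex) \<Rightarrow> ennreal" where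
  "dirichlet_integral \<omega> f =
     (\<integral>\<^sup>+ z. ennreal ((cmod (deriv f z))\<^sup>2 * \<omega> (cmod z)) * indicator (ball 0 1) z \<partial>lborel)"

lemma Hnorm2_eq_dirichlet_integral:
  "Hnorm2 \<omega> f = ennreal ((cmod (f 0))\<^sup>2) + dirichlet_integral \<omega> f / ennreal pi"
  by (simp add: Hnorm2_def dirichlet_integral_def)

lemma ennreal_divide_less_top_iff: "0 < c \<Longrightarrow> x / ennreal c < top \<longleftrightarrow> x < top"
  by (simp add: ennreal_divide_eq_top_iff flip: less_top)

lemma ennreal_times_divide_cancel: "0 < c \<Longrightarrow> ennreal c * (x / ennreal c) = x"
  by (simp add: ennreal_times_divide mult.commute mult_divide_eq_ennreal)

lemma inH_iff_dirichlet_integral_finite: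
  "inH \<omega> f \<longleftrightarrow> f holomorphic_on ball 0 1 \<and> dirichlet_integral \<omega> f < \<infinity>"
  by (simp add: inH_def Hnorm2_eq_dirichlet_integral ennreal_divide_less_top_iff)

lemma Hnorm2_eq_Hnorm_sq: "inH \<omega> f \<Longrightarrow> Hnorm2 \<omega> f = ennreal ((Hnorm \<omega> f)\<^sup>2)"
  unfolding inH_def Hnorm_def by (simp add: less_top[symmetric])

lemma norm_at_0_le_Hnorm:
  assumes "inH \<omega> f"
  shows "cmod (f 0) \<le> Hnorm \<omega> f"
proof (rule power2_le_imp_le)
  have "ennreal ((cmod (f 0))\<^sup>2) \<le> Hnorm2 \<omega> f"
    by (simp add: Hnorm2_eq_dirichlet_integral)
  then show "(cmod (f 0))\<^sup>2 \<le> (Hnorm \<omega> f)\<^sup>2"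
    by (simp add: Hnorm2_eq_Hnorm_sq[OF assms])
qed (simp add: Hnorm_def)

lemma dirichlet_integral_le_Hnorm:
  assumes "inH \<omega> f"
  shows "dirichlet_integral \<omega> f \<le> ennreal (pi * (Hnorm \<omega> f)\<^sup>2)"
proof -
  have "dirichlet_integral \<omega> f / ennreal pi \<le> Hnorm2 \<omega> f"
    by (simp add: Hnorm2_eq_dirichlet_integral)
  also have "\<dots> = ennreal ((Hnorm \<omega> f)\<^sup>2)"
    by (rule Hnorm2_eq_Hnorm_sq[OF assms])
  finally have "ennreal pi * (dirichlet_integral \<omega> f / ennreal pi) \<le> ennreal pi * ennreal ((Hnorm \<omega> f)\<^sup>2)"
    by (rule mult_left_mono) simp
  then show ?thesis
    by (simp add: ennreal_times_divide_cancel ennreal_mult)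
qed

lemma borel_measurable_dirichlet_integrand:
  assumes "weight \<omega>" and "h holomorphic_on ball 0 1"
  shows "(\<lambda>z. ennreal ((cmod (h z))\<^sup>2 * \<omega> (cmod z)) * indicator (ball 0 1) z) \<in> borel_measurable borel"
proof -
  have "continuous_on {0..<1} \<omega>" using assms(1) by (simp add: weight_def)
  then have "continuous_on (ball 0 1) (\<lambda>z. \<omega> (cmod z))"
    by (rule continuous_on_compose2) (auto intro: continuous_intros)
  then have "continuous_on (ball 0 1) (\<lambda>z. (cmod (h z))\<^sup>2 * \<omega> (cmod z))"
    using holomorphic_on_imp_continuous_on[OF assms(2)] by (intro continuous_intros)
  then have "(\<lambda>z. indicator (ball 0 1) z *\<^sub>R ((cmod (h z))\<^sup>2 * \<omega> (cmod z))) \<in> borel_measurable borel"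
    by (intro borel_measurable_continuous_on_indicator) auto
  then have "(\<lambda>z. ennreal (indicator (ball 0 1) z *\<^sub>R ((cmod (h z))\<^sup>2 * \<omega> (cmod z)))) \<in> borel_measurable borel"
    by measurable
  moreover have "(\<lambda>z. ennreal (indicator (ball 0 1) z *\<^sub>R ((cmod (h z))\<^sup>2 * \<omega> (cmod z))))
      = (\<lambda>z. ennreal ((cmod (h z))\<^sup>2 * \<omega> (cmod z)) * indicator (ball 0 1) z)"
    by (auto simp: fun_eq_iff split: split_indicator)
  ultimately show ?thesis by simp
qed

lemma inH_id:
  assumes "weight \<omega>"
  shows "inH \<omega> id"
proof -
  have \<omega>: "continuous_on {0..<1} \<omega>" "set_integrable lborel {0..<1} \<omega>"
    using assms by (auto simp: weight_def)
  define W where "W = (\<lambda>r. ennreal (indicator {0..<1} r *\<^sub>R \<omega> r))"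
  have "(\<lambda>r. indicator {0..<1} r *\<^sub>R \<omega> r) \<in> borel_measurable borel"
    by (rule borel_measurable_continuous_on_indicator) (auto intro: \<omega>(1))
  then have [measurable]: "W \<in> borel_measurable borel"
    unfolding W_def by measurable
  have "dirichlet_integral \<omega> id \<le> (\<integral>\<^sup>+z. indicator (cball (0::complex) 1) z * W (cmod z) \<partial>lborel)"
    unfolding dirichlet_integral_def
    by (intro nn_integral_mono) (simp add: W_def indicator_def)
  also have "\<dots> = (\<integral>\<^sup>+r. ennreal (2 * pi * r) * indicator {0..1} r * W r \<partial>lborel)"
    by (rule nn_integral_unit_disc_radial) simp
  also have "\<dots> \<le> (\<integral>\<^sup>+r. ennreal (2 * pi) * W r \<partial>lborel)"
    by (intro nn_integral_mono) (simp add: indicator_def mult_right_mono ennreal_leI)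
  also have "\<dots> = ennreal (2 * pi) * (\<integral>\<^sup>+r. W r \<partial>lborel)"
    by (rule nn_integral_cmult) simp
  also have "\<dots> < \<infinity>"
    using integrableD(2)[OF \<omega>(2)[unfolded set_integrable_def]]
    by (simp add: W_def ennreal_mult_less_top less_top)
  finally show ?thesis
    by (simp add: inH_iff_dirichlet_integral_finite)
qed

lemma deriv_norm_sq_le_dirichlet_integral:
  assumes f: "f holomorphic_on ball 0 1"
    and m: "0 \<le> m" "\<And>r. 0 \<le> r \<Longrightarrow> r \<le> R \<Longrightarrow> m \<le> \<omega> r"
    and u: "cmod u + \<delta> \<le> R" "R < 1" "0 < \<delta>"
  shows "ennreal (m * ((cmod (deriv f u))\<^sup>2 * (pi * \<delta>\<^sup>2))) \<le> dirichlet_integral \<omega> f"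
proof -
  have holf': "deriv f holomorphic_on ball 0 1"
    using f by (rule holomorphic_deriv) simp
  have sub: "ball u (1 - cmod u) \<subseteq> ball 0 1"
    by (simp add: ball_subset_ball_iff dist_norm)
  have cball_sub: "cball u \<delta> \<subseteq> ball 0 1"
    using u by (simp add: cball_subset_ball_iff dist_norm)
  have "m * ((cmod (deriv f u))\<^sup>2 * (pi * \<delta>\<^sup>2))
      \<le> m * (\<integral>v. indicator (ball u \<delta>) v * (cmod (deriv f v))\<^sup>2 \<partial>lborel)"
    using holomorphic_on_subset[OF holf' sub] u m(1)
    by (intro mult_left_mono norm_sq_le_ball_integral) auto
  also have "\<dots> = (\<integral>v. m * indicator (ball u \<delta>) v * (cmod (deriv f v))\<^sup>2 \<partial>lborel)"
    by (simp add: mult.assoc)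
  finally have "ennreal (m * ((cmod (deriv f u))\<^sup>2 * (pi * \<delta>\<^sup>2)))
      \<le> ennreal (\<integral>v. m * indicator (ball u \<delta>) v * (cmod (deriv f v))\<^sup>2 \<partial>lborel)"
    by (rule ennreal_leI)
  also have "\<dots> = (\<integral>\<^sup>+v. ennreal (m * indicator (ball u \<delta>) v * (cmod (deriv f v))\<^sup>2) \<partial>lborel)"
  proof (rule nn_integral_eq_integral[symmetric])
    have "continuous_on (cball u \<delta>) (\<lambda>v. m * (cmod (deriv f v))\<^sup>2)"
      using holomorphic_on_imp_continuous_on[OF holomorphic_on_subset[OF holf' cball_sub]]
      by (intro continuous_intros)
    from set_integrable_ball_if_continuous_on_cball[OF this]
    show "integrable lborel (\<lambda>v. m * indicator (ball u \<delta>) v * (cmod (deriv f v))\<^sup>2)"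
      by (simp add: set_integrable_def mult_ac)
  qed (use m(1) in simp)
  also have "\<dots> \<le> dirichlet_integral \<omega> f"
    unfolding dirichlet_integral_def
  proof (intro nn_integral_mono)
    fix v :: complex
    show "ennreal (m * indicator (ball u \<delta>) v * (cmod (deriv f v))\<^sup>2)
        \<le> ennreal ((cmod (deriv f v))\<^sup>2 * \<omega> (cmod v)) * indicator (ball 0 1) v"
    proof (cases "v \<in> ball u \<delta>")
      case True
      then have "cmod v \<le> R" and "v \<in> ball 0 1"
        using u norm_triangle_ineq2[of v u] cball_sub by (auto simp: dist_norm norm_minus_commute)
      then show ?thesis
        using m(2)[of "cmod v"] True
        by (auto intro!: ennreal_leI simp: mult.commute[of m] mult_left_mono)
    qed simp
  qed
  finally show ?thesis .
qed

lemma weight_bounded_below: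
  assumes \<omega>: "weight \<omega>" and R: "0 \<le> R" "R < 1"
  obtains m where "0 < m" "\<And>r. 0 \<le> r \<Longrightarrow> r \<le> R \<Longrightarrow> m \<le> \<omega> r"
proof -
  have "continuous_on {0..R} \<omega>"
    using \<omega> R by (auto simp: weight_def elim!: continuous_on_subset)
  then obtain r0 where "r0 \<in> {0..R}" "\<And>r. r \<in> {0..R} \<Longrightarrow> \<omega> r0 \<le> \<omega> r"
    using continuous_attains_inf[of "{0..R}" \<omega>] R by auto
  then show thesis using \<omega> R by (intro that[of "\<omega> r0"]) (auto simp: weight_def)
qed

lemma norm_deriv_le_Hnorm_on_cball:
  assumes \<omega>: "weight \<omega>" and s: "0 \<le> s" "s < 1"
  obtains C where "0 \<le> C" "\<And>f z. inH \<omega> f \<Longrightarrow> cmod z \<le> s \<Longrightarrow> cmod (deriv f z) \<le> C * Hnorm \<omega> f"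
proof -
  define R where "R = (1 + s) / 2"
  define \<delta> where "\<delta> = (1 - s) / 2"
  have R: "0 \<le> R" "R < 1" and \<delta>: "0 < \<delta>" using s by (auto simp: R_def \<delta>_def)
  obtain m where m: "0 < m" "\<And>r. 0 \<le> r \<Longrightarrow> r \<le> R \<Longrightarrow> m \<le> \<omega> r"
    using weight_bounded_below[OF \<omega> R] by blast
  show thesis
  proof (rule that)
    show "0 \<le> 1 / (sqrt m * \<delta>)" using m \<delta> by simp
    fix f z assume f: "inH \<omega> f" and z: "cmod z \<le> s"
    have hol: "f holomorphic_on ball 0 1" using f by (simp add: inH_def)
    have "cmod z + \<delta> \<le> R" using z by (simp add: R_def \<delta>_def field_simps)
    from deriv_norm_sq_le_dirichlet_integral[OF hol less_imp_le[OF m(1)] m(2) this R(2) \<delta>]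
    have "ennreal (m * ((cmod (deriv f z))\<^sup>2 * (pi * \<delta>\<^sup>2))) \<le> ennreal (pi * (Hnorm \<omega> f)\<^sup>2)"
      using dirichlet_integral_le_Hnorm[OF f] by (rule order.trans)
    then have "(sqrt m * \<delta> * cmod (deriv f z))\<^sup>2 \<le> (Hnorm \<omega> f)\<^sup>2"
      using m(1) by (simp add: ennreal_le_iff power_mult_distrib mult_ac)
    then have "sqrt m * \<delta> * cmod (deriv f z) \<le> Hnorm \<omega> f"
      by (rule power2_le_imp_le) (simp add: Hnorm_def)
    moreover have "0 < sqrt m * \<delta>" using m(1) \<delta> by simp
    ultimately show "cmod (deriv f z) \<le> 1 / (sqrt m * \<delta>) * Hnorm \<omega> f"
      by (simp add: field_simps)
  qed
qed

lemma norm_le_Hnorm_on_cball: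
  assumes \<omega>: "weight \<omega>" and s: "0 \<le> s" "s < 1"
  obtains C where "0 \<le> C" "\<And>f w. inH \<omega> f \<Longrightarrow> cmod w \<le> s \<Longrightarrow> cmod (f w) \<le> C * Hnorm \<omega> f"
proof -
  obtain C where C: "0 \<le> C" "\<And>f z. inH \<omega> f \<Longrightarrow> cmod z \<le> s \<Longrightarrow> cmod (deriv f z) \<le> C * Hnorm \<omega> f"
    using norm_deriv_le_Hnorm_on_cball[OF \<omega> s] by blast
  show thesis
  proof (rule that)
    show "0 \<le> 1 + C" using C(1) by simp
    fix f w assume f: "inH \<omega> f" and w: "cmod w \<le> s"
    have hol: "f holomorphic_on ball 0 1" using f by (simp add: inH_def)
    have H: "0 \<le> Hnorm \<omega> f" by (simp add: Hnorm_def)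
    have "cmod (f w - f 0) \<le> C * Hnorm \<omega> f * cmod (w - 0)"
    proof (rule field_differentiable_bound[of "cball 0 s" f "deriv f"])
      show "(f has_field_derivative deriv f z) (at z within cball 0 s)" if "z \<in> cball 0 s" for z
        using that s by (intro holomorphic_derivI[OF hol]) auto
    qed (use C f w s in auto)
    also have "\<dots> \<le> C * Hnorm \<omega> f"
      using w s H C(1) by (intro mult_left_le) auto
    finally show "cmod (f w) \<le> (1 + C) * Hnorm \<omega> f"
      using norm_at_0_le_Hnorm[OF f] norm_triangle_ineq2[of "f w" "f 0"]
      by (simp add: algebra_simps)
  qed
qed

section \<open>Taylor tails\<close>

lemma norm_taylor_coeff_le:
  assumes f: "f holomorphic_on ball 0 1" and s: "0 < s" "s < 1"
    and M: "\<And>w. cmod w \<le> s \<Longrightarrow> cmod (f w) \<le> M"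
  shows "cmod (taylor_coeff f k) \<le> M / s ^ k"
proof -
  have "f holomorphic_on ball 0 s" using f s by (elim holomorphic_on_subset) auto
  moreover have "continuous_on (cball 0 s) f"
    using holomorphic_on_imp_continuous_on[OF f] s by (elim continuous_on_subset) auto
  ultimately have "norm ((deriv ^^ k) f 0) \<le> fact k * M / s ^ k"
    using s(1) M by (intro Cauchy_inequality) auto
  then show ?thesis
    by (simp add: taylor_coeff_def norm_divide field_simps)
qed

lemma holomorphic_on_partial_sum: "partial_sum l f holomorphic_on S"
  unfolding partial_sum_def[abs_def] by (intro holomorphic_intros)

lemma partial_sum_at_0: "1 \<le> l \<Longrightarrow> partial_sum l f 0 = f 0"
proof -
  assume "1 \<le> l"
  then obtain k where "l = Suc k" by (cases l) auto
  then show ?thesis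
    by (simp add: partial_sum_def taylor_coeff_def sum.lessThan_Suc_shift)
qed

lemma sums_taylor_tail:
  assumes "f holomorphic_on ball 0 1" and "cmod w < 1"
  shows "(\<lambda>k. taylor_coeff f (k + l) * w ^ (k + l)) sums (f w - partial_sum l f w)"
proof -
  have "(\<lambda>k. taylor_coeff f k * w ^ k) sums f w"
    using holomorphic_power_series[OF assms(1), of w] assms(2) by (simp add: taylor_coeff_def)
  from sums_split_initial_segment[OF this, of l] show ?thesis
    by (simp add: partial_sum_def)
qed

lemma norm_taylor_tail_le:
  assumes f: "f holomorphic_on ball 0 1" and s: "0 < s" "s < 1"
    and M: "\<And>w. cmod w \<le> s \<Longrightarrow> cmod (f w) \<le> M"
    and r: "0 \<le> r" "r < s" and w: "cmod w \<le> r"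
  shows "cmod (f w - partial_sum l f w) \<le> M / (1 - r / s) * (r / s) ^ l"
proof -
  define q where "q = r / s"
  have q: "0 \<le> q" "q < 1" using r s by (auto simp: q_def)
  have "cmod (f 0) \<le> M" using M[of 0] s by simp
  then have "0 \<le> M" by (rule order.trans[OF norm_ge_zero])
  have term_le: "norm (taylor_coeff f (k + l) * w ^ (k + l)) \<le> M * q ^ l * q ^ k" for k
  proof -
    have "norm (taylor_coeff f (k + l) * w ^ (k + l)) \<le> M / s ^ (k + l) * r ^ (k + l)"
      unfolding norm_mult norm_power
      by (intro mult_mono norm_taylor_coeff_le[OF f s M] power_mono w)
         (auto simp: \<open>0 \<le> M\<close> s(1) less_imp_le)
    also have "\<dots> = M * q ^ l * q ^ k"
      by (simp add: q_def power_divide power_add mult_ac)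
    finally show ?thesis .
  qed
  have geometric: "(\<lambda>k. M * q ^ l * q ^ k) sums (M * q ^ l / (1 - q))"
    using sums_mult[OF geometric_sums[of q], of "M * q ^ l"] q by simp
  have "cmod (f w - partial_sum l f w) \<le> M * q ^ l / (1 - q)"
    using sums_unique[OF sums_taylor_tail[OF f, of w l]] sums_unique[OF geometric]
      norm_suminf_le[OF term_le sums_summable[OF geometric]] w r s
    by simp
  then show ?thesis by (simp add: q_def)
qed

lemma norm_deriv_taylor_tail_le:
  assumes f: "f holomorphic_on ball 0 1" and s: "0 < s" "s < 1"
    and M: "\<And>w. cmod w \<le> s \<Longrightarrow> cmod (f w) \<le> M"
    and r: "0 \<le> \<rho>" "\<rho> < r" "r < s" and w: "cmod w \<le> \<rho>"
  shows "cmod (deriv (\<lambda>w. f w - partial_sum l f w) w) \<le> M / (1 - r / s) / (r - \<rho>) * (r / s) ^ l"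
proof -
  have sub: "cball w (r - \<rho>) \<subseteq> cball 0 r"
    using w by (simp add: cball_subset_cball_iff dist_norm)
  also have "\<dots> \<subseteq> ball 0 1" using r s by auto
  finally have hol: "(\<lambda>w. f w - partial_sum l f w) holomorphic_on cball w (r - \<rho>)"
    using f by (intro holomorphic_intros holomorphic_on_partial_sum) (auto elim: holomorphic_on_subset)
  have "norm ((deriv ^^ 1) (\<lambda>w. f w - partial_sum l f w) w)
      \<le> fact 1 * (M / (1 - r / s) * (r / s) ^ l) / (r - \<rho>) ^ 1"
  proof (rule Cauchy_inequality)
    show "(\<lambda>w. f w - partial_sum l f w) holomorphic_on ball w (r - \<rho>)"
      using hol by (rule holomorphic_on_subset) auto
    show "continuous_on (cball w (r - \<rho>)) (\<lambda>w. f w - partial_sum l f w)"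
      using hol by (rule holomorphic_on_imp_continuous_on)
    fix x assume "norm (w - x) = r - \<rho>"
    then have "x \<in> cball w (r - \<rho>)" by (simp add: dist_norm)
    then have "cmod x \<le> r" using sub by auto
    then show "norm (f x - partial_sum l f x) \<le> M / (1 - r / s) * (r / s) ^ l"
      using r by (intro norm_taylor_tail_le[OF f s M]) auto
  qed (use r in simp)
  then show ?thesis by simp
qed

section \<open>Composition with the symbol\<close>

lemma dirichlet_integral_comp_le:
  assumes \<omega>: "weight \<omega>" and \<phi>: "\<phi> holomorphic_on ball 0 1" "\<phi> ` ball 0 1 \<subseteq> ball 0 1"
    and R: "R holomorphic_on ball 0 1" and b: "\<And>z. z \<in> ball 0 1 \<Longrightarrow> cmod (deriv R (\<phi> z)) \<le> b"
  shows "dirichlet_integral \<omega> (R \<circ> \<phi>) \<le> ennreal (b\<^sup>2) * dirichlet_integral \<omega> \<phi>"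
proof -
  have "ennreal ((cmod (deriv (R \<circ> \<phi>) z))\<^sup>2 * \<omega> (cmod z)) * indicator (ball 0 1) z
      \<le> ennreal (b\<^sup>2) * (ennreal ((cmod (deriv \<phi> z))\<^sup>2 * \<omega> (cmod z)) * indicator (ball 0 1) z)" for z
  proof (cases "z \<in> ball 0 1")
    case True
    have "0 \<le> \<omega> (cmod z)" using \<omega> True by (auto simp: weight_def less_imp_le)
    have "deriv (R \<circ> \<phi>) z = deriv R (\<phi> z) * deriv \<phi> z"
      using True \<phi> R by (intro deriv_chain holomorphic_on_imp_differentiable_at) auto
    then have "(cmod (deriv (R \<circ> \<phi>) z))\<^sup>2 * \<omega> (cmod z) \<le> b\<^sup>2 * ((cmod (deriv \<phi> z))\<^sup>2 * \<omega> (cmod z))"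
      using b[OF True] \<open>0 \<le> \<omega> (cmod z)\<close>
      by (auto simp: norm_mult power_mult_distrib mult.assoc intro!: mult_right_mono power_mono)
    then show ?thesis
      using True \<open>0 \<le> \<omega> (cmod z)\<close> by (simp add: ennreal_mult[symmetric] ennreal_leI)
  qed simp
  then have "dirichlet_integral \<omega> (R \<circ> \<phi>)
      \<le> (\<integral>\<^sup>+z. ennreal (b\<^sup>2) * (ennreal ((cmod (deriv \<phi> z))\<^sup>2 * \<omega> (cmod z)) * indicator (ball 0 1) z) \<partial>lborel)"
    unfolding dirichlet_integral_def by (rule nn_integral_mono)
  also have "\<dots> = ennreal (b\<^sup>2) * dirichlet_integral \<omega> \<phi>"
    unfolding dirichlet_integral_def
    using borel_measurable_dirichlet_integrand[OF \<omega> holomorphic_deriv[OF \<phi>(1)]]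
    by (intro nn_integral_cmult) (simp_all add: measurable_lborel1)
  finally show ?thesis .
qed

lemma Hnorm_comp_le:
  assumes \<omega>: "weight \<omega>" and \<phi>: "\<phi> holomorphic_on ball 0 1" "\<And>z. z \<in> ball 0 1 \<Longrightarrow> cmod (\<phi> z) \<le> \<rho>"
    and "\<rho> < 1" and D: "dirichlet_integral \<omega> \<phi> = ennreal D" "0 \<le> D"
    and R: "R holomorphic_on ball 0 1"
    and a: "\<And>w. cmod w \<le> \<rho> \<Longrightarrow> cmod (R w) \<le> a"
    and b: "\<And>w. cmod w \<le> \<rho> \<Longrightarrow> cmod (deriv R w) \<le> b"
  shows "Hnorm \<omega> (R \<circ> \<phi>) \<le> sqrt (a\<^sup>2 + b\<^sup>2 * D / pi)"
proof -
  have "\<phi> ` ball 0 1 \<subseteq> ball 0 1" using \<phi>(2) \<open>\<rho> < 1\<close> by fastforce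
  from dirichlet_integral_comp_le[OF \<omega> \<phi>(1) this R b[OF \<phi>(2)]]
  have "dirichlet_integral \<omega> (R \<circ> \<phi>) / ennreal pi \<le> ennreal (b\<^sup>2) * ennreal D / ennreal pi"
    by (simp add: D divide_right_mono_ennreal)
  also have "\<dots> = ennreal (b\<^sup>2 * D / pi)"
    using D(2) by (simp add: ennreal_mult[symmetric] divide_ennreal)
  finally have "Hnorm2 \<omega> (R \<circ> \<phi>) \<le> ennreal (a\<^sup>2) + ennreal (b\<^sup>2 * D / pi)"
    unfolding Hnorm2_eq_dirichlet_integral using a[OF \<phi>(2)[of 0]]
    by (intro add_mono ennreal_leI power_mono) auto
  also have "\<dots> = ennreal (a\<^sup>2 + b\<^sup>2 * D / pi)"
    using D(2) by (simp add: ennreal_plus)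
  finally have "enn2real (Hnorm2 \<omega> (R \<circ> \<phi>)) \<le> a\<^sup>2 + b\<^sup>2 * D / pi"
    using D(2) by (intro enn2real_leI) auto
  then show ?thesis
    unfolding Hnorm_def by (rule real_sqrt_le_mono)
qed

lemma Hnorm_eq_0_if_vanishing:
  assumes "\<And>z. z \<in> ball 0 1 \<Longrightarrow> g z = 0"
  shows "Hnorm \<omega> g = 0"
proof -
  have "deriv g z = 0" if "z \<in> ball 0 1" for z
  proof -
    have "((\<lambda>_. 0) has_field_derivative 0) (at z)" by simp
    then have "(g has_field_derivative 0) (at z)"
      by (rule has_field_derivative_transform_within_open[where S = "ball 0 1"]) (use assms that in auto)
    then show ?thesis by (rule DERIV_imp_deriv)
  qed
  then have "dirichlet_integral \<omega> g = 0"
    unfolding dirichlet_integral_def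
    by (subst nn_integral_cong[where v = "\<lambda>_. 0"]) (auto split: split_indicator)
  then show ?thesis
    using assms[of 0] by (simp add: Hnorm_def Hnorm2_eq_dirichlet_integral)
qed

lemma Hnorm_comp_taylor_tail_le:
  assumes \<omega>: "weight \<omega>"
    and \<phi>: "\<phi> holomorphic_on ball 0 1" "\<And>z. z \<in> ball 0 1 \<Longrightarrow> cmod (\<phi> z) \<le> \<rho>"
    and D: "dirichlet_integral \<omega> \<phi> = ennreal D" "0 \<le> D"
    and r: "0 \<le> \<rho>" "\<rho> < r" "r < s" "s < 1"
    and f: "f holomorphic_on ball 0 1" and M: "\<And>w. cmod w \<le> s \<Longrightarrow> cmod (f w) \<le> M"
  defines "A \<equiv> M / (1 - r / s)" and "B \<equiv> M / (1 - r / s) / (r - \<rho>)"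
  shows "Hnorm \<omega> (\<lambda>z. f (\<phi> z) - partial_sum l f (\<phi> z)) \<le> (r / s) ^ l * sqrt (A\<^sup>2 + B\<^sup>2 * D / pi)"
proof -
  have s: "0 < s" "s < 1" using r by linarith+
  have "(\<lambda>w. f w - partial_sum l f w) holomorphic_on ball 0 1"
    using f by (intro holomorphic_intros holomorphic_on_partial_sum)
  moreover have "cmod (f w - partial_sum l f w) \<le> A * (r / s) ^ l" if "cmod w \<le> \<rho>" for w
    using norm_taylor_tail_le[OF f s M, of r w l] r that by (simp add: A_def)
  moreover have "cmod (deriv (\<lambda>w. f w - partial_sum l f w) w) \<le> B * (r / s) ^ l"
    if "cmod w \<le> \<rho>" for w
    using norm_deriv_taylor_tail_le[OF f s M, of \<rho> r w l] r that by (simp add: B_def)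
  ultimately have "Hnorm \<omega> ((\<lambda>w. f w - partial_sum l f w) \<circ> \<phi>)
      \<le> sqrt ((A * (r / s) ^ l)\<^sup>2 + (B * (r / s) ^ l)\<^sup>2 * D / pi)"
    using r by (intro Hnorm_comp_le[OF \<omega> \<phi> _ D]) auto
  also have "\<dots> = sqrt (((r / s) ^ l)\<^sup>2 * (A\<^sup>2 + B\<^sup>2 * D / pi))"
    by (simp add: power_mult_distrib algebra_simps)
  also have "\<dots> = (r / s) ^ l * sqrt (A\<^sup>2 + B\<^sup>2 * D / pi)"
    using r s by (simp add: real_sqrt_mult)
  finally show ?thesis by (simp add: comp_def)
qed

lemma Hnorm_comp_taylor_tail_exp_bound:
  assumes \<omega>: "weight \<omega>" and \<phi>: "inH \<omega> \<phi>" "\<And>z. z \<in> ball 0 1 \<Longrightarrow> cmod (\<phi> z) \<le> \<rho>"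
    and \<rho>: "0 < \<rho>" "0 < \<epsilon>" "\<rho> * exp \<epsilon> < 1"
  shows "\<exists>K>0. \<forall>f l. inH \<omega> f \<and> Hnorm \<omega> f \<le> 1 \<longrightarrow>
    Hnorm \<omega> (\<lambda>z. f (\<phi> z) - partial_sum l f (\<phi> z)) \<le> K * \<rho> ^ l * exp (\<epsilon> * real l)"
proof -
  define s where "s = exp (- \<epsilon> / 2)"
  define r where "r = \<rho> * exp (\<epsilon> / 2)"
  have r: "\<rho> < r" "r < s" "s < 1" and q: "r / s = \<rho> * exp \<epsilon>"
    using \<rho> by (auto simp: s_def r_def exp_minus field_simps simp flip: exp_add)
  obtain C where C: "0 \<le> C" "\<And>f w. inH \<omega> f \<Longrightarrow> cmod w \<le> s \<Longrightarrow> cmod (f w) \<le> C * Hnorm \<omega> f"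
    using norm_le_Hnorm_on_cball[OF \<omega>, of s] r by (auto simp: s_def)
  define D where "D = enn2real (dirichlet_integral \<omega> \<phi>)"
  have D: "dirichlet_integral \<omega> \<phi> = ennreal D" "0 \<le> D"
    using \<phi>(1) by (simp_all add: D_def inH_iff_dirichlet_integral_finite less_top)
  define K where "K = sqrt ((C / (1 - r / s))\<^sup>2 + (C / (1 - r / s) / (r - \<rho>))\<^sup>2 * D / pi)"
  show ?thesis
  proof (intro exI[of _ "K + 1"] conjI allI impI)
    show "0 < K + 1" using D(2) by (simp add: K_def add_nonneg_pos)
    fix f l assume f: "inH \<omega> f \<and> Hnorm \<omega> f \<le> 1"
    have "cmod (f w) \<le> C" if "cmod w \<le> s" for w
    proof -
      have "cmod (f w) \<le> C * Hnorm \<omega> f" using C(2) f that by blast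
      also have "\<dots> \<le> C" using C(1) f by (simp add: mult_left_le)
      finally show ?thesis .
    qed
    with f \<phi>(1) have "Hnorm \<omega> (\<lambda>z. f (\<phi> z) - partial_sum l f (\<phi> z)) \<le> (r / s) ^ l * K"
      unfolding K_def using \<rho>(1) r
      by (intro Hnorm_comp_taylor_tail_le[OF \<omega> _ \<phi>(2) D]) (auto simp: inH_def)
    also have "\<dots> \<le> (K + 1) * \<rho> ^ l * exp (\<epsilon> * real l)"
      using \<rho>(1) by (simp add: q power_mult_distrib exp_of_nat_mult[symmetric] mult_ac mult_left_mono)
    finally show "Hnorm \<omega> (\<lambda>z. f (\<phi> z) - partial_sum l f (\<phi> z)) \<le> (K + 1) * \<rho> ^ l * exp (\<epsilon> * real l)" .
  qed
qed

theorem lemma3p8: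
  fixes \<omega> :: "real \<Rightarrow> real" and \<phi> :: "complex \<Rightarrow> complex" and \<rho> \<epsilon> :: real
  assumes "weight \<omega>"
    and "symbol \<omega> \<phi>"
    and "\<rho> = (SUP z\<in>ball 0 1. cmod (\<phi> z))"
    and "\<rho> < 1"
    and "\<epsilon> > 0"
    and "\<rho> * exp \<epsilon> < 1"
  shows "\<exists>K>0. \<forall>f. inH \<omega> f \<and> Hnorm \<omega> f \<le> 1 \<longrightarrow>
           (\<forall>l::nat. l \<ge> 1 \<longrightarrow>
              Hnorm \<omega> (\<lambda>z. f (\<phi> z) - partial_sum l f (\<phi> z)) \<le> K * \<rho> ^ l * exp (\<epsilon> * real l))"
proof -
  have "inH \<omega> (id \<circ> \<phi>)" and \<phi>_ball: "\<phi> ` ball 0 1 \<subseteq> ball 0 1"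
    using assms(2) inH_id[OF assms(1)] by (auto simp: symbol_def)
  then have \<phi>: "inH \<omega> \<phi>" by simp
  have \<phi>_le: "cmod (\<phi> z) \<le> \<rho>" if "z \<in> ball 0 1" for z
    unfolding assms(3) using \<phi>_ball that
    by (intro cSUP_upper bdd_aboveI[of _ 1]) (auto simp: less_imp_le)
  have "0 \<le> \<rho>" using \<phi>_le[of 0] by (simp add: order.trans[OF norm_ge_zero])
  then consider "\<rho> = 0" | "0 < \<rho>" by fastforce
  then show ?thesis
  proof cases
    case 1
    then have "Hnorm \<omega> (\<lambda>z. f (\<phi> z) - partial_sum l f (\<phi> z)) = 0" if "1 \<le> l" for f l
      using \<phi>_le partial_sum_at_0[OF that] by (intro Hnorm_eq_0_if_vanishing) auto
    then show ?thesis using 1 by (intro exI[of _ 1]) auto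
  next
    case 2
    from Hnorm_comp_taylor_tail_exp_bound[OF assms(1) \<phi> \<phi>_le 2 assms(5,6)] show ?thesis by blast
  qed
qed

end
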